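(* Let $k>0$, $M>0$, $\beta\in\,]0,\tfrac12[$ and $P_0=\max\{10,(\frac{1+M}{4\pi})^{4/3},\frac{64(k+1)^2}{1-2\beta},\frac{256(k+1)^2M^4}{(1-2\beta)^2}\}$. Let $f\ge0$ be spherically symmetric with $f\in\tilde{\mathcal A}_{M,\beta}$, suppose $f(x,v)\le1$ for all $(x,v)$, and suppose there is $P\ge P_0$ such that $P^{1/4}\int_{\mathbb R^3}\int_{|v|\ge P}\sqrt{1+|v|^2}f\,dx\,dv\ge1$. Then there is a spherically symmetric function $\tilde f\ge0$ such that: $\rho_{\tilde f}=\rho_f$ (in particular $\tilde f\in\tilde{\mathcal A}_{M,\beta}$); $\mathcal D(\tilde f)\le\mathcal D(f)$; $\operatorname{supp}\tilde f\subset\{(x,v):|v|\le P+1\}$; $\tilde f(x,v)\le1$ for all $(x,v)$; and $$P^{1/4}\int_{\mathbb R^3}\int_{P\le|v|\le P+1}\sqrt{1+|v|^2}\,\tilde f\,dx\,dv\le1.$$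
   Context: Let $\chi(s)=\frac{k}{k+1}s^{1+1/k}$. A measurable $f\ge0$ on $\mathbb R^3\times\mathbb R^3$ is spherically symmetric if $f(Ax,Av)=f(x,v)$ for all $A\in SO(3)$. For such $f$: $\rho_f(x)=\int\sqrt{1+|v|^2}f(x,v)\,dv$ (radial, written $\rho_f(r)$), $m_f(r)=\int_{|x|\le r}\int\sqrt{1+|v|^2}f\,dx\,dv$, $\lambda_f$ given by $e^{-2\lambda_f(r)}=1-2m_f(r)/r$, and $\mathcal D(f)=\int\int e^{\lambda_f(|x|)}(\chi(f)-f)\,dx\,dv$. $\tilde{\mathcal A}_{M,\beta}$ is the set of measurable spherically symmetric $f\ge0$ with $\int\int\sqrt{1+|v|^2}f\,dx\,dv=M$, $m_f(r)/r\le\beta$ for $r\in\,]0,\infty[$, and $\rho_f(r)\le1$ for $r\in[0,\infty[$. *)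

theory Defs
  imports "HOL-Analysis.Analysis"
begin

type_synonym phase = "(real^3) \<times> (real^3)"

definition chi :: "real \<Rightarrow> real \<Rightarrow> real" where
  "chi k s = k / (k + 1) * s powr (1 + 1 / k)"

definition rot3 :: "(real^3^3) set" where
  "rot3 = {A. orthogonal_matrix A \<and> det A = 1}"

definition spher_sym :: "(phase \<Rightarrow> real) \<Rightarrow> bool" where
  "spher_sym f \<longleftrightarrow> (\<forall>A\<in>rot3. \<forall>x v. f (A *v x, A *v v) = f (x, v))"

definition rho :: "(phase \<Rightarrow> real) \<Rightarrow> real^3 \<Rightarrow> ennreal" where
  "rho f x = (\<integral>\<^sup>+ v. ennreal (sqrt (1 + (norm v)\<^sup>2) * f (x, v)) \<partial>lebesgue)"

definition mass_r :: "(phase \<Rightarrow> real) \<Rightarrow> real \<Rightarrow> ennreal" where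
  "mass_r f r = (\<integral>\<^sup>+ z. ennreal (indicator {z. norm (fst z) \<le> r} z
                  * sqrt (1 + (norm (snd z))\<^sup>2) * f z) \<partial>lebesgue)"

definition total_mass :: "(phase \<Rightarrow> real) \<Rightarrow> ennreal" where
  "total_mass f = (\<integral>\<^sup>+ z. ennreal (sqrt (1 + (norm (snd z))\<^sup>2) * f z) \<partial>lebesgue)"

(* e^{lambda_f(r)}, where e^{-2 lambda_f(r)} = 1 - 2 m_f(r)/r  (value at r = 0 irrelevant, set to 1) *)
definition exp_lambda :: "(phase \<Rightarrow> real) \<Rightarrow> real \<Rightarrow> real" where
  "exp_lambda f r = (if r > 0 then 1 / sqrt (1 - 2 * enn2real (mass_r f r) / r) else 1)"

definition Dfun :: "real \<Rightarrow> (phase \<Rightarrow> real) \<Rightarrow> real" where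
  "Dfun k f = (\<integral> z. exp_lambda f (norm (fst z)) * (chi k (f z) - f z) \<partial>lebesgue)"

definition A_tilde :: "real \<Rightarrow> real \<Rightarrow> (phase \<Rightarrow> real) set" where
  "A_tilde M \<beta> = {f. f \<in> borel_measurable lebesgue \<and> spher_sym f \<and> (\<forall>z. f z \<ge> 0)
      \<and> total_mass f = ennreal M
      \<and> (\<forall>r>0. mass_r f r \<le> ennreal (\<beta> * r))
      \<and> (\<forall>x. rho f x \<le> 1)}"

definition P0 :: "real \<Rightarrow> real \<Rightarrow> real \<Rightarrow> real" where
  "P0 k M \<beta> = Max {10, ((1 + M) / (4 * pi)) powr (4/3), 64 * (k+1)\<^sup>2 / (1 - 2*\<beta>),
                     256 * (k+1)\<^sup>2 * M ^ 4 / (1 - 2*\<beta>)\<^sup>2}"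

end

theory Submission
  imports Defs
begin

text \<open>Write \<open>\<langle>v\<rangle> = sqrt (1 + |v|\<^sup>2)\<close>. For every \<open>x\<close> choose \<open>\<mu>(x) \<in> [1/P, 1]\<close> such that the
  polytropic profile \<open>v \<mapsto> (1 - \<mu>(x) \<langle>v\<rangle>)\<^sub>+\<^sup>k\<close> has the same density \<open>\<rho>\<close> as \<open>f\<close> at \<open>x\<close>:
  the density of the profile depends continuously on \<open>\<mu>\<close>, vanishes at \<open>\<mu> = 1\<close> and is at least
  \<open>1 \<ge> \<rho>\<^sub>f(x)\<close> at \<open>\<mu> = 1/P\<close>. The rearranged function \<open>f\<^sup>~\<close> has the same \<open>\<rho>\<close>, hence the same
  masses \<open>m(r)\<close> and the same \<open>\<lambda>\<close>, inherits spherical symmetry from \<open>\<rho>\<^sub>f\<close>, and vanishes for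
  \<open>|v| \<ge> P\<close>.

  By Young's inequality, \<open>(1 - u)\<^sub>+\<^sup>k\<close> minimises \<open>s \<mapsto> \<chi>(s) - (1 - u) s\<close> over \<open>s \<ge> 0\<close>. Taking
  \<open>u = \<mu>(x) \<langle>v\<rangle>\<close> and integrating against \<open>e\<^sup>\<lambda>\<close>, the terms \<open>e\<^sup>\<lambda> \<mu> \<langle>v\<rangle> f\<close> integrate to the same
  value for \<open>f\<close> and \<open>f\<^sup>~\<close>, because they only depend on \<open>\<rho>\<close>; hence \<open>\<D>(f\<^sup>~) \<le> \<D>(f)\<close>.\<close>

section \<open>Tonelli's theorem for Lebesgue measurable functions on a product\<close>

lemma borel_measurable_completion_AE:
  fixes g g' :: "'a \<Rightarrow> 'b::second_countable_topology"
  assumes g': "g' \<in> borel_measurable M" and ae: "AE x in M. g x = g' x"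
  shows "g \<in> borel_measurable (completion M)"
proof (rule measurableI)
  fix A :: "'b set" assume A: "A \<in> sets borel"
  have s: "g' -` A \<inter> space M \<in> sets (completion M)"
    using g' A by (simp add: measurable_sets)
  have "AE x in completion M. x \<in> g' -` A \<inter> space M \<longleftrightarrow> x \<in> g -` A \<inter> space (completion M)"
    by (rule AE_completion) (use ae in \<open>eventually_elim, auto\<close>)
  then show "g -` A \<inter> space (completion M) \<in> sets (completion M)"
    by (rule completion.in_sets_AE[OF _ s]) auto
qed simp

lemma measurable_fst_lebesgue:
  "fst \<in> (lebesgue :: ('a::euclidean_space \<times> 'b::euclidean_space) measure) \<rightarrow>\<^sub>M lebesgue"
proof (rule completion.measurable_completion2)
  have "fst \<in> (lborel :: ('a \<times> 'b) measure) \<rightarrow>\<^sub>M lborel"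
    unfolding lborel_prod[symmetric] by measurable
  then show fst_meas: "fst \<in> (lebesgue :: ('a \<times> 'b) measure) \<rightarrow>\<^sub>M lborel"
    by (rule measurable_completion)
  show "null_sets lborel \<subseteq> null_sets (distr (lebesgue :: ('a \<times> 'b) measure) lborel fst)"
  proof
    fix N :: "'a set" assume N: "N \<in> null_sets lborel"
    then have "N \<times> UNIV \<in> null_sets (lborel :: ('a \<times> 'b) measure)"
      unfolding lborel_prod[symmetric] by (intro lborel.times_in_null_sets1) auto
    then have "fst -` N \<in> null_sets (lebesgue :: ('a \<times> 'b) measure)"
      by (simp add: vimage_fst null_sets_completionI)
    then show "N \<in> null_sets (distr (lebesgue :: ('a \<times> 'b) measure) lborel fst)"
      using N null_sets_distr_iff[OF fst_meas, of N] by auto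
  qed
qed

lemma nn_integral_lebesgue_prod:
  fixes h :: "'a::euclidean_space \<times> 'b::euclidean_space \<Rightarrow> ennreal"
  assumes h: "h \<in> borel_measurable lebesgue"
  shows "(\<integral>\<^sup>+z. h z \<partial>lebesgue) = (\<integral>\<^sup>+x. (\<integral>\<^sup>+y. h (x, y) \<partial>lebesgue) \<partial>lebesgue)"
    and "AE x in lebesgue. (\<lambda>y. h (x, y)) \<in> borel_measurable lebesgue"
    and "(\<lambda>x. \<integral>\<^sup>+y. h (x, y) \<partial>lebesgue) \<in> borel_measurable lebesgue"
proof -
  obtain h' where h': "h' \<in> borel_measurable (lborel \<Otimes>\<^sub>M lborel :: ('a \<times> 'b) measure)"
    and ae: "AE z in lborel \<Otimes>\<^sub>M lborel. h z = h' z"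
    using completion_ex_borel_measurable[OF h] unfolding lborel_prod by blast
  have ae_x: "AE x in lborel. AE y in lborel. h (x, y) = h' (x, y)"
    using lborel_pair.AE_pair[OF ae] by simp
  define \<phi> where "\<phi> x = (\<integral>\<^sup>+y. h' (x, y) \<partial>lborel)" for x
  have \<phi>: "\<phi> \<in> borel_measurable lborel"
    unfolding \<phi>_def using lborel.borel_measurable_nn_integral_fst[OF h'] by simp
  have inner: "AE x in lborel. (\<integral>\<^sup>+y. h (x, y) \<partial>lebesgue) = \<phi> x"
    using ae_x
  proof eventually_elim
    case (elim x)
    have "(\<integral>\<^sup>+y. h (x, y) \<partial>lebesgue) = (\<integral>\<^sup>+y. h' (x, y) \<partial>lebesgue)"
      by (rule nn_integral_cong_AE) (rule AE_completion[OF elim])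
    then show ?case by (simp add: \<phi>_def nn_integral_completion)
  qed
  then show "(\<lambda>x. \<integral>\<^sup>+y. h (x, y) \<partial>lebesgue) \<in> borel_measurable lebesgue"
    by (rule borel_measurable_completion_AE[OF \<phi>])
  show "AE x in lebesgue. (\<lambda>y. h (x, y)) \<in> borel_measurable lebesgue"
    using ae_x
  proof (rule AE_completion[OF eventually_mono])
    fix x assume "AE y in lborel. h (x, y) = h' (x, y)"
    moreover have "(\<lambda>y. h' (x, y)) \<in> borel_measurable lborel"
      using h' by measurable
    ultimately show "(\<lambda>y. h (x, y)) \<in> borel_measurable lebesgue"
      by (intro borel_measurable_completion_AE) auto
  qed
  have "(\<integral>\<^sup>+z. h z \<partial>lebesgue) = (\<integral>\<^sup>+z. h' z \<partial>lebesgue)"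
    using AE_completion[OF ae] unfolding lborel_prod by (rule nn_integral_cong_AE)
  also have "\<dots> = (\<integral>\<^sup>+z. h' z \<partial>lborel \<Otimes>\<^sub>M lborel)"
    by (simp add: lborel_prod nn_integral_completion)
  also have "\<dots> = (\<integral>\<^sup>+x. \<phi> x \<partial>lborel)"
    unfolding \<phi>_def using lborel.nn_integral_fst[OF h'] by simp
  also have "\<dots> = (\<integral>\<^sup>+x. \<phi> x \<partial>lebesgue)"
    by (simp add: nn_integral_completion)
  also have "\<dots> = (\<integral>\<^sup>+x. (\<integral>\<^sup>+y. h (x, y) \<partial>lebesgue) \<partial>lebesgue)"
    using AE_completion[OF inner] by (intro nn_integral_cong_AE) (simp add: eq_commute)
  finally show "(\<integral>\<^sup>+z. h z \<partial>lebesgue) = (\<integral>\<^sup>+x. (\<integral>\<^sup>+y. h (x, y) \<partial>lebesgue) \<partial>lebesgue)" .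
qed

section \<open>Rotation invariance of the Lebesgue integral\<close>

text \<open>No measurability of \<open>h\<close> is required: the sections \<open>v \<mapsto> f (x, v)\<close> are measurable only for
  almost every \<open>x\<close>.\<close>

lemma nn_integral_comp_le_measure_preserving:
  assumes space: "space M = UNIV" and S: "S \<in> M \<rightarrow>\<^sub>M M"
    and preserving: "\<And>B. B \<in> sets M \<Longrightarrow> emeasure M (S -` B) = emeasure M B"
    and inverse: "\<And>y. T (S y) = y"
  shows "(\<integral>\<^sup>+y. h (T y) \<partial>M) \<le> (\<integral>\<^sup>+y. h y \<partial>M)"
  unfolding nn_integral_def
proof (rule SUP_least)
  fix s assume "s \<in> {g. simple_function M g \<and> g \<le> (\<lambda>y. h (T y))}"
  then have s: "simple_function M s" and s_le: "\<And>y. s y \<le> h (T y)"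
    by (auto simp: le_fun_def)
  have "simple_function M (\<lambda>y. s (S y))"
    by (rule simple_function_comp[OF S s])
  moreover have "(\<lambda>y. s (S y)) \<le> h"
    using s_le inverse by (auto simp: le_fun_def) metis
  moreover have "integral\<^sup>S M (\<lambda>y. s (S y)) = integral\<^sup>S M s"
  proof -
    have fin: "finite (range s)" using s space by (simp add: simple_function_def)
    have sets: "s -` {y} \<in> sets M" for y
      using s space by (metis inf_top.right_neutral simple_functionD(2))
    have "integral\<^sup>S M (\<lambda>y. s (S y)) = (\<Sum>y\<in>range (\<lambda>y. s (S y)). y * emeasure M (s -` {y}))"
      using preserving[OF sets] by (simp add: simple_integral_def space vimage_def)
    also have "\<dots> = (\<Sum>y\<in>range s. y * emeasure M (s -` {y}))"
    proof (rule sum.mono_neutral_left[OF fin])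
      show "\<forall>i\<in>range s - range (\<lambda>y. s (S y)). i * emeasure M (s -` {i}) = 0"
      proof
        fix i assume "i \<in> range s - range (\<lambda>y. s (S y))"
        then have "S -` (s -` {i}) = {}" by blast
        then show "i * emeasure M (s -` {i}) = 0" using preserving[OF sets, of i] by simp
      qed
    qed auto
    finally show ?thesis by (simp add: simple_integral_def space)
  qed
  ultimately show "integral\<^sup>S M s \<le> (SUP g \<in> {g. simple_function M g \<and> g \<le> h}. integral\<^sup>S M g)"
    by (metis (mono_tags, lifting) SUP_upper mem_Collect_eq)
qed

lemma orthogonal_image_sets_lebesgue:
  fixes T :: "'a::euclidean_space \<Rightarrow> 'a"
  assumes "orthogonal_transformation T" "S \<in> sets lebesgue"
  shows "T ` S \<in> sets lebesgue"
proof (rule differentiable_image_in_sets_lebesgue[OF assms(2) order_refl])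
  show "T differentiable_on S"
    using assms(1) by (simp add: orthogonal_transformation_linear linear_imp_differentiable_on)
qed

lemma emeasure_orthogonal_image:
  fixes T :: "real^'n::{finite,wellorder} \<Rightarrow> real^'n::_"
  assumes T: "orthogonal_transformation T" and S: "S \<in> sets lebesgue"
  shows "emeasure lebesgue (T ` S) = emeasure lebesgue S"
proof -
  define S' where "S' n = S \<inter> cball 0 (real n)" for n
  have S': "S' n \<in> lmeasurable" for n
    unfolding S'_def using S by (intro bounded_set_imp_lmeasurable) auto
  have TS': "T ` S' n \<in> lmeasurable" "measure lebesgue (T ` S' n) = measure lebesgue (S' n)" for n
    using measurable_orthogonal_image[OF T S'] measure_orthogonal_image[OF T S'] by auto
  have S_eq: "S = (\<Union>n. S' n)"
    unfolding S'_def using real_arch_simple by (auto simp: mem_cball_0)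
  have inc: "incseq S'" "incseq (\<lambda>n. T ` S' n)"
    unfolding S'_def incseq_def by auto
  have "emeasure lebesgue (T ` S) = (SUP n. emeasure lebesgue (T ` S' n))"
    using TS' inc by (subst SUP_emeasure_incseq) (auto simp: S_eq image_UN)
  also have "\<dots> = (SUP n. emeasure lebesgue (S' n))"
    using TS' S' by (simp add: emeasure_eq_measure2)
  also have "\<dots> = emeasure lebesgue S"
    using S' inc by (subst SUP_emeasure_incseq) (auto simp: S_eq[symmetric])
  finally show ?thesis .
qed

lemma nn_integral_orthogonal_transformation_le:
  fixes T :: "real^'n::{finite,wellorder} \<Rightarrow> real^'n::_"
  assumes T: "orthogonal_transformation T"
  shows "(\<integral>\<^sup>+x. h (T x) \<partial>lebesgue) \<le> (\<integral>\<^sup>+x. h x \<partial>lebesgue)"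
proof (rule nn_integral_comp_le_measure_preserving)
  have preimage: "inv T -` B = T ` B" for B
    using T by (auto simp: orthogonal_transformation_bij bij_vimage_eq_inv_image bij_imp_bij_inv inv_inv_eq)
  show "inv T \<in> lebesgue \<rightarrow>\<^sub>M lebesgue"
    by (rule measurableI) (use T in \<open>auto simp: preimage orthogonal_image_sets_lebesgue\<close>)
  show "emeasure lebesgue (inv T -` B) = emeasure lebesgue B" if "B \<in> sets lebesgue" for B
    unfolding preimage by (rule emeasure_orthogonal_image[OF T that])
  show "T (inv T y) = y" for y
    using T by (simp add: orthogonal_transformation_surj surj_f_inv_f)
qed simp

lemma nn_integral_orthogonal_transformation:
  fixes T :: "real^'n::{finite,wellorder} \<Rightarrow> real^'n::_"
  assumes T: "orthogonal_transformation T"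
  shows "(\<integral>\<^sup>+x. h (T x) \<partial>lebesgue) = (\<integral>\<^sup>+x. h x \<partial>lebesgue)"
proof (rule antisym[OF nn_integral_orthogonal_transformation_le[OF T]])
  have "(\<integral>\<^sup>+x. h x \<partial>lebesgue) = (\<integral>\<^sup>+x. h (T (inv T x)) \<partial>lebesgue)"
    using T by (simp add: orthogonal_transformation_surj surj_f_inv_f)
  also have "\<dots> \<le> (\<integral>\<^sup>+x. h (T x) \<partial>lebesgue)"
    using T by (intro nn_integral_orthogonal_transformation_le orthogonal_transformation_inv)
  finally show "(\<integral>\<^sup>+x. h x \<partial>lebesgue) \<le> (\<integral>\<^sup>+x. h (T x) \<partial>lebesgue)" .
qed

section \<open>The least solution of \<open>F x = t\<close>\<close>

text \<open>Inserting \<open>b\<close> keeps the set nonempty for every \<open>t\<close>, so that \<open>level_inf F a b\<close> is antitone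
  on all of \<open>\<real>\<close>, and hence Borel measurable.\<close>

definition level_inf :: "(real \<Rightarrow> real) \<Rightarrow> real \<Rightarrow> real \<Rightarrow> real \<Rightarrow> real" where
  "level_inf F a b t = Inf (insert b {x \<in> {a..b}. F x \<le> t})"

lemma bdd_below_level_set: "bdd_below (insert (b::real) {x \<in> {a..b}. F x \<le> t})"
  by (rule bdd_belowI[of _ "min a b"]) (auto simp: min_le_iff_disj)

lemma level_inf_bounds:
  assumes "a \<le> b"
  shows "a \<le> level_inf F a b t" "level_inf F a b t \<le> b"
  unfolding level_inf_def using assms
  by (auto intro!: cInf_greatest cInf_lower bdd_below_level_set)

lemma level_inf_antimono:
  assumes "t \<le> t'"
  shows "level_inf F a b t' \<le> level_inf F a b t"
  unfolding level_inf_def using assms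
  by (intro cInf_superset_mono bdd_below_level_set) auto

lemma borel_measurable_level_inf [measurable]: "level_inf F a b \<in> borel_measurable borel"
proof -
  have "mono (\<lambda>t. - level_inf F a b t)"
    by (intro monoI) (simp add: level_inf_antimono)
  then have "(\<lambda>t. - (- level_inf F a b t)) \<in> borel_measurable borel"
    by (intro borel_measurable_uminus borel_measurable_mono)
  then show ?thesis by simp
qed

lemma level_inf_solves:
  assumes F: "continuous_on {a..b} F" and ab: "a \<le> b" and t: "F b \<le> t" "t \<le> F a"
  shows "F (level_inf F a b t) = t"
proof -
  let ?S = "{x \<in> {a..b}. F x \<le> t}"
  let ?m = "level_inf F a b t"
  have S: "insert b ?S = ?S"
    using ab t by auto
  have "?S = {a..b} \<inter> F -` {..t}"
    by auto
  then have "closed ?S"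
    using continuous_closed_preimage[OF F closed_atLeastAtMost, of "{..t}"] by simp
  then have "?m \<in> ?S"
    unfolding level_inf_def S using S ab bdd_below_level_set[of b a F t]
    by (intro closed_contains_Inf) auto
  then have m: "a \<le> ?m" "?m \<le> b" "F ?m \<le> t"
    by auto
  have "continuous_on {a..?m} F"
    using m by (intro continuous_on_subset[OF F]) auto
  then obtain x where x: "a \<le> x" "x \<le> ?m" "F x = t"
    using IVT2'[of F ?m t a] m t by blast
  then have "x \<in> insert b ?S"
    using m by auto
  then have "?m \<le> x"
    unfolding level_inf_def by (rule cInf_lower[OF _ bdd_below_level_set])
  then show ?thesis
    using x by simp
qed

section \<open>The polytropic profile\<close>

definition rel_energy :: "'a::real_normed_vector \<Rightarrow> real" where
  "rel_energy v = sqrt (1 + (norm v)\<^sup>2)"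

lemma rel_energy_ge_1: "1 \<le> rel_energy v"
  by (simp add: rel_energy_def)

lemma rel_energy_nonneg [simp]: "0 \<le> rel_energy v"
  using rel_energy_ge_1[of v] by simp

lemma abs_rel_energy [simp]: "\<bar>rel_energy v\<bar> = rel_energy v"
  by (simp add: rel_energy_def)

lemma norm_le_rel_energy: "norm v \<le> rel_energy v"
  by (simp add: rel_energy_def real_le_rsqrt)

lemma continuous_on_rel_energy: "continuous_on UNIV rel_energy"
  unfolding rel_energy_def by (intro continuous_intros)

lemma borel_measurable_rel_energy [measurable]: "rel_energy \<in> borel_measurable borel"
  by (rule borel_measurable_continuous_onI[OF continuous_on_rel_energy])

definition polytrope :: "real \<Rightarrow> real \<Rightarrow> real" where
  "polytrope k u = (max 0 (1 - u)) powr k"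

lemma polytrope_nonneg: "0 \<le> polytrope k u"
  by (simp add: polytrope_def)

lemma polytrope_le_1: "0 \<le> k \<Longrightarrow> 0 \<le> u \<Longrightarrow> polytrope k u \<le> 1"
  unfolding polytrope_def by (intro powr_le1) auto

lemma polytrope_eq_0: "1 \<le> u \<Longrightarrow> polytrope k u = 0"
  by (simp add: polytrope_def)

lemma polytrope_eq_powr: "u < 1 \<Longrightarrow> polytrope k u = (1 - u) powr k"
  by (simp add: polytrope_def)

lemma continuous_on_polytrope: "0 < k \<Longrightarrow> continuous_on UNIV (polytrope k)"
  unfolding polytrope_def by (rule continuous_on_powr') (auto intro!: continuous_intros)

lemma borel_measurable_polytrope [measurable]: "0 < k \<Longrightarrow> polytrope k \<in> borel_measurable borel"
  by (rule borel_measurable_continuous_onI[OF continuous_on_polytrope])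

lemma polytrope_ge_one_third:
  assumes k: "0 < k" and u: "0 \<le> u" "u \<le> 1 / (2 * (k + 1))"
  shows "1/3 \<le> polytrope k u"
proof -
  have u_half: "u \<le> 1/2"
    using u k by (smt (verit) divide_left_mono mult_pos_pos)
  have "2 * u\<^sup>2 \<le> u"
    using u u_half mult_left_mono[of u "1/2" "2 * u"] by (simp add: power2_eq_square)
  then have "- 2 * u \<le> ln (1 - u)"
    using ln_one_minus_pos_lower_bound[OF u(1) u_half] by simp
  moreover have "2 * u * k \<le> 1"
    using u k by (simp add: field_simps)
  ultimately have "-1 \<le> k * ln (1 - u)"
    using mult_left_mono[of "- 2 * u" "ln (1 - u)" k] k by (simp add: algebra_simps)
  then have "exp (-1) \<le> exp (k * ln (1 - u))" by simp
  moreover have "1/3 \<le> exp (-1::real)"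
    using exp_le by (simp add: exp_minus field_simps)
  ultimately have "1/3 \<le> exp (k * ln (1 - u))" by linarith
  then show ?thesis
    using u_half by (simp add: polytrope_eq_powr powr_def)
qed

definition polytrope_rho :: "real \<Rightarrow> real \<Rightarrow> real" where
  "polytrope_rho k \<mu> = (\<integral>v. rel_energy (v::real^3) * polytrope k (\<mu> * rel_energy v) \<partial>lborel)"

lemma polytrope_rho_integrand_bound:
  assumes k: "0 < k" and \<mu>: "0 < \<mu>0" "\<mu>0 \<le> \<mu>"
  shows "rel_energy v * polytrope k (\<mu> * rel_energy v) \<le> indicator (cball 0 (1/\<mu>0)) v / \<mu>0"
proof (cases "\<mu> * rel_energy v < 1")
  case True
  have "\<mu>0 * rel_energy v < 1"
    using True \<mu> rel_energy_ge_1[of v] by (smt (verit) mult_right_mono)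
  then have small: "rel_energy v < 1/\<mu>0"
    using \<mu> by (simp add: field_simps mult.commute)
  then have "v \<in> cball 0 (1/\<mu>0)"
    using norm_le_rel_energy[of v] by simp
  moreover have "rel_energy v * polytrope k (\<mu> * rel_energy v) \<le> rel_energy v"
    using polytrope_le_1[of k "\<mu> * rel_energy v"] k \<mu> rel_energy_ge_1[of v] by (simp add: mult_left_le)
  ultimately show ?thesis
    using small by simp
next
  case False
  then show ?thesis
    using \<mu> by (simp add: polytrope_eq_0)
qed

lemma integrable_cball_indicator:
  "integrable lborel (\<lambda>v::'a::euclidean_space. indicator (cball 0 r) v / (c::real))"
  by (intro integrable_divide_zero) (cases "0 \<le> r"; simp add: emeasure_cball integrable_indicator_iff)

lemma polytrope_rho_integrable:
  assumes "0 < k" "0 < \<mu>"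
  shows "integrable lborel (\<lambda>v::real^3. rel_energy v * polytrope k (\<mu> * rel_energy v))"
proof (rule Bochner_Integration.integrable_bound[OF integrable_cball_indicator])
  show "AE v in lborel. norm (rel_energy v * polytrope k (\<mu> * rel_energy v))
          \<le> norm (indicator (cball 0 (1/\<mu>)) v / \<mu>)"
    using polytrope_rho_integrand_bound[OF assms order_refl] assms
    by (intro AE_I2) (simp add: polytrope_nonneg abs_mult)
qed (use assms in simp)

lemma continuous_on_polytrope_rho:
  assumes k: "0 < k" and \<mu>0: "0 < \<mu>0"
  shows "continuous_on {\<mu>0..} (polytrope_rho k)"
proof (rule continuous_on_sequentiallyI)
  fix \<mu> a assume \<mu>: "\<forall>n. \<mu> n \<in> {\<mu>0..}" and "a \<in> {\<mu>0..}" and lim: "\<mu> \<longlonglongrightarrow> a"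
  show "(\<lambda>n. polytrope_rho k (\<mu> n)) \<longlonglongrightarrow> polytrope_rho k a"
    unfolding polytrope_rho_def
  proof (rule integral_dominated_convergence[OF _ _ integrable_cball_indicator])
    have "(\<lambda>n. rel_energy v * polytrope k (\<mu> n * rel_energy v))
            \<longlonglongrightarrow> rel_energy v * polytrope k (a * rel_energy v)" for v :: "real^3"
    proof -
      have "isCont (polytrope k) (a * rel_energy v)"
        using continuous_on_polytrope[OF k] by (simp add: continuous_on_eq_continuous_at)
      then show ?thesis
        by (intro tendsto_intros isCont_tendsto_compose[of _ "polytrope k"] lim)
    qed
    then show "AE v in lborel. (\<lambda>n. rel_energy (v::real^3) * polytrope k (\<mu> n * rel_energy v))
                 \<longlonglongrightarrow> rel_energy v * polytrope k (a * rel_energy v)"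
      by simp
    show "AE v in lborel. norm (rel_energy v * polytrope k (\<mu> n * rel_energy v))
            \<le> indicator (cball 0 (1/\<mu>0)) v / \<mu>0" for n
      using polytrope_rho_integrand_bound[OF k \<mu>0, of "\<mu> n"] \<mu>
      by (intro AE_I2) (simp add: polytrope_nonneg abs_mult)
  qed (use k in simp_all)
qed

lemma polytrope_rho_1: "polytrope_rho k 1 = 0"
  by (simp add: polytrope_rho_def polytrope_eq_0 rel_energy_ge_1)

lemma polytrope_rho_ge_1:
  assumes k: "0 < k" and \<mu>: "0 < \<mu>" "\<mu> \<le> 1 / (4 * (k + 1))"
  shows "1 \<le> polytrope_rho k \<mu>"
proof -
  have lower: "indicator (cball 0 1) v / 3 \<le> rel_energy v * polytrope k (\<mu> * rel_energy v)"
    for v :: "real^3"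
  proof (cases "norm v \<le> 1")
    case True
    then have "sqrt (1 + (norm v)\<^sup>2) \<le> sqrt (2\<^sup>2)"
      using power_le_one[of "norm v" 2] by (intro real_sqrt_le_mono) simp
    then have "rel_energy v \<le> 2"
      by (simp add: rel_energy_def)
    then have "\<mu> * rel_energy v \<le> \<mu> * 2"
      using \<mu> by (intro mult_left_mono) auto
    also have "\<dots> \<le> 1 / (2 * (k + 1))"
      using \<mu> k by (simp add: field_simps)
    finally have "1/3 \<le> polytrope k (\<mu> * rel_energy v)"
      using polytrope_ge_one_third[OF k] \<mu> rel_energy_ge_1[of v] by simp
    then show ?thesis
      using True rel_energy_ge_1[of v] mult_mono[of 1 "rel_energy v" "1/3"] by simp
  next
    case False
    then show ?thesis
      using rel_energy_ge_1[of v] by (simp add: polytrope_nonneg)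
  qed
  have "4/3 * pi / 3 = (\<integral>v. indicator (cball (0::real^3) 1) v / 3 \<partial>lborel)"
    by (simp add: emeasure_cball unit_ball_vol_3 measure_def)
  also have "\<dots> \<le> polytrope_rho k \<mu>"
    unfolding polytrope_rho_def
    by (intro integral_mono integrable_cball_indicator polytrope_rho_integrable lower) (use k \<mu> in auto)
  finally show ?thesis
    using pi_gt3 by simp
qed

lemma nn_integral_polytrope_rho:
  assumes "0 < k" "0 < \<mu>"
  shows "(\<integral>\<^sup>+v. ennreal (rel_energy (v::real^3) * polytrope k (\<mu> * rel_energy v)) \<partial>lebesgue)
           = ennreal (polytrope_rho k \<mu>)"
  unfolding polytrope_rho_def nn_integral_completion
  by (rule nn_integral_eq_integral[OF polytrope_rho_integrable[OF assms]])
    (simp add: polytrope_nonneg rel_energy_def)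

lemma chi_nonneg: "0 < k \<Longrightarrow> 0 \<le> chi k s"
  by (simp add: chi_def)

lemma chi_le_self:
  assumes "0 < k" "0 \<le> s" "s \<le> 1"
  shows "chi k s \<le> s"
proof -
  have "s powr (1 + 1/k) \<le> s"
    using assms by (cases "s = 0") (auto intro: powr_le_one_le)
  moreover have "k / (k + 1) \<le> 1"
    using assms by simp
  ultimately have "k / (k + 1) * s powr (1 + 1/k) \<le> 1 * s"
    using assms by (intro mult_mono) auto
  then show ?thesis
    by (simp add: chi_def)
qed

lemma borel_measurable_chi [measurable]: "chi k \<in> borel_measurable borel"
  unfolding chi_def by measurable

text \<open>Young's inequality with the conjugate exponents \<open>1 + 1/k\<close> and \<open>k + 1\<close>; equality holds at
  \<open>s = polytrope k u\<close>.\<close>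

lemma polytrope_minimizes:
  assumes k: "0 < k" and s: "0 \<le> s"
  shows "chi k (polytrope k u) - (1 - u) * polytrope k u \<le> chi k s - (1 - u) * s"
proof (cases "u < 1")
  case False
  then have "(1 - u) * s \<le> 0"
    using s by (intro mult_nonpos_nonneg) auto
  then show ?thesis
    using chi_nonneg[OF k, of s] False by (simp add: polytrope_eq_0 chi_def)
next
  case True
  define t where "t = (1 - u) powr k"
  have t: "polytrope k u = t" "0 < t"
    unfolding t_def using True by (simp_all add: polytrope_eq_powr)
  have "t powr (1 + 1/k) = t * (1 - u)"
    unfolding t_def using True k by (simp add: powr_add powr_powr)
  then have chi_t: "chi k t = k / (k + 1) * (t * (1 - u))"
    by (simp add: chi_def)
  have "s * (1 - u) \<le> s powr (1 + 1/k) / (1 + 1/k) + (1 - u) powr (k + 1) / (k + 1)"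
    using k s True by (intro Youngs_inequality) (auto simp: field_simps)
  moreover have "(1 - u) powr (k + 1) = t * (1 - u)"
    unfolding t_def using True by (simp add: powr_add)
  moreover have "s powr (1 + 1/k) / (1 + 1/k) = chi k s"
    unfolding chi_def using k by (simp add: field_simps)
  ultimately have "s * (1 - u) \<le> chi k s + t * (1 - u) / (k + 1)"
    by simp
  moreover have "chi k t - (1 - u) * t = - (t * (1 - u) / (k + 1))"
    unfolding chi_t using k by (simp add: field_simps)
  ultimately show ?thesis
    unfolding t by (simp add: algebra_simps)
qed

section \<open>Quantities determined by the density \<open>\<rho>\<close>\<close>

lemma borel_measurable_lebesgue_continuous:
  fixes \<phi> :: "'a::euclidean_space \<Rightarrow> 'b::euclidean_space"
  shows "continuous_on UNIV \<phi> \<Longrightarrow> \<phi> \<in> borel_measurable lebesgue"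
  by (simp add: borel_measurable_continuous_onI measurable_completion)

lemma borel_measurable_rel_energy_snd [measurable]:
  "(\<lambda>z::phase. rel_energy (snd z)) \<in> borel_measurable lebesgue"
  by (intro borel_measurable_lebesgue_continuous continuous_on_compose2[OF continuous_on_rel_energy])
    (auto intro: continuous_intros)

lemma rho_eq: "rho F x = (\<integral>\<^sup>+v. ennreal (rel_energy v * F (x, v)) \<partial>lebesgue)"
  by (simp add: rho_def rel_energy_def)

lemma total_mass_eq: "total_mass F = (\<integral>\<^sup>+z. ennreal (rel_energy (snd z) * F z) \<partial>lebesgue)"
  by (simp add: total_mass_def rel_energy_def)

lemma borel_measurable_rho [measurable]:
  "F \<in> borel_measurable lebesgue \<Longrightarrow> rho F \<in> borel_measurable lebesgue"
  unfolding rho_eq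
  by (rule nn_integral_lebesgue_prod(3)[where h="\<lambda>z. ennreal (rel_energy (snd z) * F z)", simplified])
    measurable

lemma nn_integral_fst_weighted_rho:
  fixes c :: "real^3 \<Rightarrow> ennreal"
  assumes [measurable]: "F \<in> borel_measurable lebesgue" "c \<in> borel_measurable lebesgue"
  shows "(\<integral>\<^sup>+z. c (fst z) * ennreal (rel_energy (snd z) * F z) \<partial>lebesgue) = (\<integral>\<^sup>+x. c x * rho F x \<partial>lebesgue)"
proof -
  note [measurable] = measurable_fst_lebesgue
  let ?h = "\<lambda>z. ennreal (rel_energy (snd z) * F z)"
  have "AE x in lebesgue. (\<lambda>v. ?h (x, v)) \<in> borel_measurable lebesgue"
    by (rule nn_integral_lebesgue_prod(2)) measurable
  then have "AE x in lebesgue. (\<integral>\<^sup>+v. c x * ?h (x, v) \<partial>lebesgue) = c x * rho F x"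
    by eventually_elim (simp add: nn_integral_cmult rho_eq)
  then show ?thesis
    by (subst nn_integral_lebesgue_prod(1)) (auto intro: nn_integral_cong_AE)
qed

lemma mass_r_eq_nn_integral_rho:
  assumes "F \<in> borel_measurable lebesgue"
  shows "mass_r F r = (\<integral>\<^sup>+x. indicator {x. norm x \<le> r} x * rho F x \<partial>lebesgue)"
proof -
  have "{x::real^3. norm x \<le> r} \<in> sets lebesgue"
    using closed_cball[of "0::real^3" r] by (simp add: cball_def dist_norm)
  then have ind: "(\<lambda>x. indicator {x::real^3. norm x \<le> r} x :: ennreal) \<in> borel_measurable lebesgue"
    by measurable
  have "mass_r F r
      = (\<integral>\<^sup>+z. indicator {x. norm x \<le> r} (fst z) * ennreal (rel_energy (snd z) * F z) \<partial>lebesgue)"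
    unfolding mass_r_def rel_energy_def by (intro nn_integral_cong) (simp split: split_indicator)
  also have "\<dots> = (\<integral>\<^sup>+x. indicator {x. norm x \<le> r} x * rho F x \<partial>lebesgue)"
    by (rule nn_integral_fst_weighted_rho[OF assms ind])
  finally show ?thesis .
qed

lemma total_mass_eq_nn_integral_rho:
  assumes "F \<in> borel_measurable lebesgue"
  shows "total_mass F = (\<integral>\<^sup>+x. rho F x \<partial>lebesgue)"
  using nn_integral_fst_weighted_rho[OF assms, of "\<lambda>_. 1"] by (simp add: total_mass_eq)

lemma rho_eq_imp_same_mass:
  assumes "F \<in> borel_measurable lebesgue" "G \<in> borel_measurable lebesgue" "rho F = rho G"
  shows "mass_r F = mass_r G" "total_mass F = total_mass G" "exp_lambda F = exp_lambda G"
  using assms by (simp_all add: fun_eq_iff mass_r_eq_nn_integral_rho total_mass_eq_nn_integral_rho exp_lambda_def)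

lemma orthogonal_transformation_rot3: "A \<in> rot3 \<Longrightarrow> orthogonal_transformation ((*v) A)"
  by (simp add: rot3_def orthogonal_transformation_matrix)

lemma rel_energy_rot3: "A \<in> rot3 \<Longrightarrow> rel_energy (A *v v) = rel_energy v"
  unfolding rel_energy_def using orthogonal_transformation_norm[OF orthogonal_transformation_rot3] by simp

lemma rho_rot3:
  assumes f: "spher_sym f" and A: "A \<in> rot3"
  shows "rho f (A *v x) = rho f x"
proof -
  have "rho f (A *v x) = (\<integral>\<^sup>+v. ennreal (rel_energy (A *v v) * f (A *v x, A *v v)) \<partial>lebesgue)"
    unfolding rho_eq
    by (rule nn_integral_orthogonal_transformation[OF orthogonal_transformation_rot3[OF A], symmetric])
  also have "\<dots> = rho f x"
    using f A by (simp add: rho_eq rel_energy_rot3 spher_sym_def)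
  finally show ?thesis .
qed

lemma exp_lambda_bounds:
  assumes \<beta>: "0 \<le> \<beta>" "\<beta> < 1/2" and mass: "\<forall>r>0. mass_r f r \<le> ennreal (\<beta> * r)"
  shows "1 \<le> exp_lambda f s" "exp_lambda f s \<le> 1 / sqrt (1 - 2 * \<beta>)"
proof -
  have sqrt_\<beta>: "0 < sqrt (1 - 2 * \<beta>)" "sqrt (1 - 2 * \<beta>) \<le> 1"
    using \<beta> by auto
  have "1 \<le> exp_lambda f s \<and> exp_lambda f s \<le> 1 / sqrt (1 - 2 * \<beta>)"
  proof (cases "0 < s")
    case True
    define m where "m = enn2real (mass_r f s)"
    have "m \<le> \<beta> * s"
      unfolding m_def using mass True \<beta> by (simp add: enn2real_leI)
    then have "1 - 2 * \<beta> \<le> 1 - 2 * m / s" "1 - 2 * m / s \<le> 1"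
      using True by (simp_all add: m_def field_simps)
    then have "sqrt (1 - 2 * \<beta>) \<le> sqrt (1 - 2 * m / s)" "sqrt (1 - 2 * m / s) \<le> 1"
      by simp_all
    moreover have "exp_lambda f s = 1 / sqrt (1 - 2 * m / s)"
      using True by (simp add: exp_lambda_def m_def)
    ultimately show ?thesis
      using sqrt_\<beta> by (simp add: divide_left_mono le_divide_eq)
  qed (use sqrt_\<beta> in \<open>simp add: exp_lambda_def le_divide_eq\<close>)
  then show "1 \<le> exp_lambda f s" "exp_lambda f s \<le> 1 / sqrt (1 - 2 * \<beta>)"
    by auto
qed

lemma mass_r_mono: "r \<le> r' \<Longrightarrow> mass_r f r \<le> mass_r f r'"
  unfolding mass_r_def by (intro nn_integral_mono) (auto split: split_indicator)

lemma mass_r_le_total_mass: "mass_r f r \<le> total_mass f"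
  unfolding mass_r_def total_mass_def by (intro nn_integral_mono) (auto split: split_indicator)

lemma borel_measurable_exp_lambda [measurable]:
  assumes "total_mass f < \<infinity>"
  shows "exp_lambda f \<in> borel_measurable borel"
proof -
  have "mass_r f r < \<infinity>" for r
    using mass_r_le_total_mass assms by (rule le_less_trans)
  then have "mono (\<lambda>r. enn2real (mass_r f r))"
    by (intro monoI enn2real_mono mass_r_mono) auto
  then have [measurable]: "(\<lambda>r. enn2real (mass_r f r)) \<in> borel_measurable borel"
    by (rule borel_measurable_mono)
  show ?thesis
    unfolding exp_lambda_def[abs_def] by measurable
qed

section \<open>Comparison of the free energies\<close>

lemma integrable_if_bounded_by_mass:
  assumes F [measurable]: "F \<in> borel_measurable lebesgue" "\<forall>z. 0 \<le> F z" "total_mass F < \<infinity>"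
    and h: "h \<in> borel_measurable lebesgue" "\<forall>z. \<bar>h z\<bar> \<le> C * (rel_energy (snd z) * F z)"
    and "0 \<le> C"
  shows "integrable lebesgue h"
proof (rule Bochner_Integration.integrable_bound)
  have "(\<integral>\<^sup>+z. ennreal (C * (rel_energy (snd z) * F z)) \<partial>lebesgue)
      = (\<integral>\<^sup>+z. ennreal C * ennreal (rel_energy (snd z) * F z) \<partial>lebesgue)"
    using \<open>0 \<le> C\<close> by (simp add: ennreal_mult')
  also have "\<dots> = ennreal C * total_mass F"
    unfolding total_mass_eq by (intro nn_integral_cmult) measurable
  also have "\<dots> < \<infinity>"
    using F(3) by (simp add: ennreal_mult_less_top)
  finally show "integrable lebesgue (\<lambda>z. C * (rel_energy (snd z) * F z))"
    using F \<open>0 \<le> C\<close> by (intro integrableI_nonneg) auto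
  show "AE z in lebesgue. norm (h z) \<le> norm (C * (rel_energy (snd z) * F z))"
  proof (rule AE_I2)
    fix z
    show "norm (h z) \<le> norm (C * (rel_energy (snd z) * F z))"
      using h(2)[rule_format, of z] F(2)[rule_format, of z] \<open>0 \<le> C\<close> by (simp add: abs_mult)
  qed
qed (use h in simp)

lemma integral_fst_weighted_eq_of_rho_eq:
  fixes c :: "real^3 \<Rightarrow> real"
  assumes [measurable]: "F \<in> borel_measurable lebesgue" "G \<in> borel_measurable lebesgue" "c \<in> borel_measurable lebesgue"
    and nonneg: "\<forall>z. 0 \<le> F z" "\<forall>z. 0 \<le> G z" "\<forall>x. 0 \<le> c x"
    and rho: "rho F = rho G"
  shows "(\<integral>z. c (fst z) * (rel_energy (snd z) * F z) \<partial>lebesgue)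
       = (\<integral>z. c (fst z) * (rel_energy (snd z) * G z) \<partial>lebesgue)"
proof -
  note [measurable] = measurable_fst_lebesgue
  have "(\<integral>z. c (fst z) * (rel_energy (snd z) * H z) \<partial>lebesgue)
      = enn2real (\<integral>\<^sup>+x. ennreal (c x) * rho H x \<partial>lebesgue)"
    if [measurable]: "H \<in> borel_measurable lebesgue" and H: "\<forall>z. 0 \<le> H z" for H
  proof -
    have "(\<integral>z. c (fst z) * (rel_energy (snd z) * H z) \<partial>lebesgue)
        = enn2real (\<integral>\<^sup>+z. ennreal (c (fst z) * (rel_energy (snd z) * H z)) \<partial>lebesgue)"
      using H nonneg by (intro integral_eq_nn_integral AE_I2) auto
    also have "\<dots> = enn2real (\<integral>\<^sup>+z. ennreal (c (fst z)) * ennreal (rel_energy (snd z) * H z) \<partial>lebesgue)"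
      using nonneg by (simp add: ennreal_mult')
    also have "\<dots> = enn2real (\<integral>\<^sup>+x. ennreal (c x) * rho H x \<partial>lebesgue)"
      by (subst nn_integral_fst_weighted_rho) measurable
    finally show ?thesis .
  qed
  from this[of F] this[of G] show ?thesis
    using nonneg rho by simp
qed

lemma integrable_free_energy_terms:
  fixes F :: "phase \<Rightarrow> real" and \<mu> e :: "real^3 \<Rightarrow> real"
  assumes k: "0 < k"
    and F [measurable]: "F \<in> borel_measurable lebesgue"
    and F_bounds: "\<forall>z. 0 \<le> F z \<and> F z \<le> 1" and F_mass: "total_mass F < \<infinity>"
    and \<mu> [measurable]: "\<mu> \<in> borel_measurable lebesgue" and \<mu>_bounds: "\<forall>x. 0 \<le> \<mu> x \<and> \<mu> x \<le> 1"
    and e [measurable]: "e \<in> borel_measurable lebesgue" and e_bounds: "\<forall>x. 0 \<le> e x \<and> e x \<le> C"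
  shows "integrable lebesgue (\<lambda>z. e (fst z) * (chi k (F z) - F z))"
    and "integrable lebesgue (\<lambda>z. e (fst z) * \<mu> (fst z) * (rel_energy (snd z) * F z))"
proof -
  note [measurable] = measurable_fst_lebesgue
  have C: "0 \<le> C"
    using e_bounds by (meson order_trans)
  have F_z: "0 \<le> F z" "F z \<le> 1" for z
    using F_bounds[rule_format, of z] by auto
  have "\<bar>chi k (F z) - F z\<bar> \<le> F z" for z
    using chi_nonneg[OF k, of "F z"] chi_le_self[OF k F_z] by simp
  also have "F z \<le> rel_energy (snd z) * F z" for z
    using mult_right_mono[OF rel_energy_ge_1 F_z(1)] by simp
  finally have "\<bar>e (fst z) * (chi k (F z) - F z)\<bar> \<le> C * (rel_energy (snd z) * F z)" for z
    unfolding abs_mult using e_bounds by (intro mult_mono) auto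
  then show "integrable lebesgue (\<lambda>z. e (fst z) * (chi k (F z) - F z))"
    using F_bounds F_mass C by (intro integrable_if_bounded_by_mass[of F _ C]) auto
  have "e x * \<mu> x \<le> e x * 1" for x
    using e_bounds \<mu>_bounds by (intro mult_left_mono) auto
  also have "e x * 1 \<le> C" for x
    using e_bounds by simp
  finally have "\<bar>e (fst z) * \<mu> (fst z) * (rel_energy (snd z) * F z)\<bar> \<le> C * (rel_energy (snd z) * F z)" for z
    unfolding abs_mult using e_bounds \<mu>_bounds F_z by (intro mult_mono) auto
  then show "integrable lebesgue (\<lambda>z. e (fst z) * \<mu> (fst z) * (rel_energy (snd z) * F z))"
    using F_bounds F_mass C by (intro integrable_if_bounded_by_mass[of F _ C]) auto
qed

lemma free_energy_polytrope_le:
  fixes f :: "phase \<Rightarrow> real" and \<mu> e :: "real^3 \<Rightarrow> real"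
  assumes k: "0 < k"
    and f [measurable]: "f \<in> borel_measurable lebesgue"
    and f_bounds: "\<forall>z. 0 \<le> f z \<and> f z \<le> 1" and f_mass: "total_mass f < \<infinity>"
    and \<mu> [measurable]: "\<mu> \<in> borel_measurable lebesgue" and \<mu>_bounds: "\<forall>x. 0 \<le> \<mu> x \<and> \<mu> x \<le> 1"
    and e [measurable]: "e \<in> borel_measurable lebesgue" and e_bounds: "\<forall>x. 0 \<le> e x \<and> e x \<le> C"
    and g: "g = (\<lambda>z. polytrope k (\<mu> (fst z) * rel_energy (snd z)))"
    and rho: "rho g = rho f"
  shows "(\<integral>z. e (fst z) * (chi k (g z) - g z) \<partial>lebesgue) \<le> (\<integral>z. e (fst z) * (chi k (f z) - f z) \<partial>lebesgue)"
proof -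
  note [measurable] = measurable_fst_lebesgue borel_measurable_polytrope[OF k]
  have g_meas [measurable]: "g \<in> borel_measurable lebesgue"
    unfolding g by measurable
  have g_bounds: "\<forall>z. 0 \<le> g z \<and> g z \<le> 1"
    unfolding g using k \<mu>_bounds by (auto intro!: polytrope_nonneg polytrope_le_1)
  have g_mass: "total_mass g < \<infinity>"
    using rho_eq_imp_same_mass(2)[OF g_meas f rho] f_mass by simp
  define E where "E F z = e (fst z) * (chi k (F z) - F z)" for F :: "phase \<Rightarrow> real" and z
  define L where "L F z = e (fst z) * \<mu> (fst z) * (rel_energy (snd z) * F z)" for F :: "phase \<Rightarrow> real" and z
  have integrable: "integrable lebesgue (E f)" "integrable lebesgue (L f)"
    "integrable lebesgue (E g)" "integrable lebesgue (L g)"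
    unfolding E_def L_def using integrable_free_energy_terms[OF k _ _ _ \<mu> \<mu>_bounds e e_bounds]
      f f_bounds f_mass g_meas g_bounds g_mass by auto
  have "E g z \<le> E f z + L f z - L g z" for z
  proof -
    let ?u = "\<mu> (fst z) * rel_energy (snd z)"
    have "chi k (g z) - (1 - ?u) * g z \<le> chi k (f z) - (1 - ?u) * f z"
      unfolding g using polytrope_minimizes[OF k] f_bounds by blast
    then have "e (fst z) * (chi k (g z) - (1 - ?u) * g z) \<le> e (fst z) * (chi k (f z) - (1 - ?u) * f z)"
      using e_bounds by (intro mult_left_mono) auto
    then show ?thesis
      unfolding E_def L_def by (simp add: algebra_simps)
  qed
  then have "integral\<^sup>L lebesgue (E g) \<le> integral\<^sup>L lebesgue (\<lambda>z. E f z + L f z - L g z)"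
    using integrable by (intro integral_mono) auto
  also have "\<dots> = integral\<^sup>L lebesgue (E f) + integral\<^sup>L lebesgue (L f) - integral\<^sup>L lebesgue (L g)"
    using integrable by simp
  also have "integral\<^sup>L lebesgue (L f) = integral\<^sup>L lebesgue (L g)"
    unfolding L_def using f_bounds g_bounds e_bounds \<mu>_bounds rho
    by (intro integral_fst_weighted_eq_of_rho_eq[where c="\<lambda>x. e x * \<mu> x", simplified]) auto
  finally show ?thesis
    by (simp add: E_def)
qed

section \<open>The rearrangement\<close>

lemma four_k_plus_one_le_P0:
  assumes "0 < k" "0 < \<beta>" "\<beta> < 1/2"
  shows "4 * (k + 1) \<le> P0 k M \<beta>"
proof -
  have "4 * (k + 1) * 1 \<le> 4 * (k + 1) * (16 * (k + 1))"
    using assms by (intro mult_left_mono) auto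
  then have "4 * (k + 1) \<le> 64 * (k + 1)\<^sup>2"
    by (simp add: power2_eq_square algebra_simps)
  also have "\<dots> \<le> 64 * (k + 1)\<^sup>2 / (1 - 2 * \<beta>)"
    using assms by (simp add: le_divide_eq mult_left_le)
  also have "\<dots> \<le> P0 k M \<beta>"
    unfolding P0_def by (rule Max_ge) auto
  finally show ?thesis .
qed

locale polytropic_rearrangement =
  fixes k P :: real and f :: "phase \<Rightarrow> real"
  assumes k_pos: "0 < k" and P_large: "4 * (k + 1) \<le> P"
    and f_meas [measurable]: "f \<in> borel_measurable lebesgue" and rho_f_le_1: "\<forall>x. rho f x \<le> 1"
begin

definition level :: "real^3 \<Rightarrow> real" where
  "level x = level_inf (polytrope_rho k) (1/P) 1 (enn2real (rho f x))"

definition ftilde :: "phase \<Rightarrow> real" where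
  "ftilde = (\<lambda>z. polytrope k (level (fst z) * rel_energy (snd z)))"

lemma inverse_P_bounds: "0 < 1/P" "1/P \<le> 1 / (4 * (k + 1))" "1/P \<le> 1"
proof -
  show "0 < 1/P" "1/P \<le> 1 / (4 * (k + 1))"
    using k_pos P_large by (simp_all add: frac_le)
  have "1 \<le> P"
    using k_pos P_large by (simp add: algebra_simps)
  then show "1/P \<le> 1"
    by simp
qed

lemma level_bounds: "1/P \<le> level x" "level x \<le> 1"
  unfolding level_def using level_inf_bounds inverse_P_bounds(3) by auto

lemma level_pos: "0 < level x"
  using inverse_P_bounds(1) level_bounds(1) by (rule less_le_trans)

lemma rho_f_finite: "rho f x < \<infinity>"
proof -
  have "(1::ennreal) < \<infinity>"
    by simp
  then show ?thesis
    using rho_f_le_1 order_le_less_trans by blast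
qed

lemma polytrope_rho_level: "polytrope_rho k (level x) = enn2real (rho f x)"
  unfolding level_def
proof (rule level_inf_solves)
  show "continuous_on {1/P..1} (polytrope_rho k)"
    using continuous_on_polytrope_rho[OF k_pos inverse_P_bounds(1)] by (rule continuous_on_subset) auto
  have "enn2real (rho f x) \<le> 1"
    using rho_f_le_1 by (simp add: enn2real_leI)
  also have "\<dots> \<le> polytrope_rho k (1/P)"
    using polytrope_rho_ge_1[OF k_pos inverse_P_bounds(1,2)] .
  finally show "enn2real (rho f x) \<le> polytrope_rho k (1/P)" .
qed (simp_all add: polytrope_rho_1 inverse_P_bounds)

lemma rho_ftilde: "rho ftilde = rho f"
proof
  fix x
  have "rho ftilde x = ennreal (polytrope_rho k (level x))"
    unfolding rho_eq ftilde_def fst_conv snd_conv by (rule nn_integral_polytrope_rho[OF k_pos level_pos])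
  also have "\<dots> = rho f x"
    using rho_f_finite by (simp add: polytrope_rho_level)
  finally show "rho ftilde x = rho f x" .
qed

lemma ftilde_bounds: "0 \<le> ftilde z" "ftilde z \<le> 1"
  unfolding ftilde_def using k_pos level_pos[of "fst z"]
  by (simp_all add: polytrope_nonneg polytrope_le_1)

lemma borel_measurable_level [measurable]: "level \<in> borel_measurable lebesgue"
  unfolding level_def[abs_def] by measurable

lemma borel_measurable_ftilde [measurable]: "ftilde \<in> borel_measurable lebesgue"
proof -
  note [measurable] = measurable_fst_lebesgue borel_measurable_polytrope[OF k_pos]
  show ?thesis
    unfolding ftilde_def by measurable
qed

lemma ftilde_vanishes: "P \<le> norm (snd z) \<Longrightarrow> ftilde z = 0"
proof -
  assume "P \<le> norm (snd z)"
  then have "1 \<le> (1/P) * rel_energy (snd z)"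
    using norm_le_rel_energy[of "snd z"] inverse_P_bounds(1) by (simp add: field_simps)
  also have "\<dots> \<le> level (fst z) * rel_energy (snd z)"
    using level_bounds by (intro mult_right_mono) auto
  finally show "ftilde z = 0"
    by (simp add: ftilde_def polytrope_eq_0)
qed

lemma spher_sym_ftilde: "spher_sym f \<Longrightarrow> spher_sym ftilde"
  by (simp add: spher_sym_def ftilde_def level_def rho_rot3 rel_energy_rot3)

lemma ftilde_same_mass:
  "mass_r ftilde = mass_r f" "total_mass ftilde = total_mass f" "exp_lambda ftilde = exp_lambda f"
  using rho_eq_imp_same_mass[OF borel_measurable_ftilde f_meas rho_ftilde] by auto

lemma ftilde_in_A_tilde: "f \<in> A_tilde M \<beta> \<Longrightarrow> ftilde \<in> A_tilde M \<beta>"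
  using ftilde_same_mass rho_ftilde ftilde_bounds spher_sym_ftilde by (simp add: A_tilde_def)

lemma Dfun_ftilde_le:
  assumes \<beta>: "0 \<le> \<beta>" "\<beta> < 1/2" and mass: "\<forall>r>0. mass_r f r \<le> ennreal (\<beta> * r)"
    and f_mass: "total_mass f < \<infinity>" and f_bounds: "\<forall>z. 0 \<le> f z \<and> f z \<le> 1"
  shows "Dfun k ftilde \<le> Dfun k f"
  unfolding Dfun_def ftilde_same_mass
proof (rule free_energy_polytrope_le[OF k_pos f_meas f_bounds f_mass borel_measurable_level _ _ _ ftilde_def rho_ftilde])
  show "\<forall>x::real^3. 0 \<le> exp_lambda f (norm x) \<and> exp_lambda f (norm x) \<le> 1 / sqrt (1 - 2 * \<beta>)"
    using exp_lambda_bounds[OF \<beta> mass] by (auto intro: order_trans[OF zero_le_one])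
  have [measurable]: "exp_lambda f \<in> borel_measurable borel"
    using f_mass by (rule borel_measurable_exp_lambda)
  have "(\<lambda>x::real^3. exp_lambda f (norm x)) \<in> borel_measurable lborel"
    by measurable
  then show "(\<lambda>x::real^3. exp_lambda f (norm x)) \<in> borel_measurable lebesgue"
    by (rule measurable_completion)
  show "\<forall>x. 0 \<le> level x \<and> level x \<le> 1"
    using level_bounds level_pos by (simp add: less_imp_le)
qed

end

theorem lemma3p2:
  fixes k M \<beta> P :: real and f :: "phase \<Rightarrow> real"
  assumes "k > 0" and "M > 0" and "0 < \<beta>" and "\<beta> < 1/2"
    and "f \<in> A_tilde M \<beta>"
    and "\<forall>z. f z \<le> 1"
    and "P \<ge> P0 k M \<beta>"
    and "ennreal (P powr (1/4)) * (\<integral>\<^sup>+ z. ennreal (indicator {z. norm (snd z) \<ge> P} z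
            * sqrt (1 + (norm (snd z))\<^sup>2) * f z) \<partial>lebesgue) \<ge> 1"
  shows "\<exists>g :: phase \<Rightarrow> real.
           g \<in> borel_measurable lebesgue \<and> spher_sym g \<and> (\<forall>z. g z \<ge> 0)
         \<and> rho g = rho f
         \<and> g \<in> A_tilde M \<beta>
         \<and> Dfun k g \<le> Dfun k f
         \<and> (\<forall>x v. g (x, v) \<noteq> 0 \<longrightarrow> norm v \<le> P + 1)
         \<and> (\<forall>z. g z \<le> 1)
         \<and> ennreal (P powr (1/4)) * (\<integral>\<^sup>+ z. ennreal (indicator {z. P \<le> norm (snd z) \<and> norm (snd z) \<le> P + 1} z
              * sqrt (1 + (norm (snd z))\<^sup>2) * g z) \<partial>lebesgue) \<le> 1"
proof -
  from \<open>f \<in> A_tilde M \<beta>\<close> have f: "f \<in> borel_measurable lebesgue" "spher_sym f" "\<forall>z. 0 \<le> f z"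
    and f_mass: "total_mass f = ennreal M" "\<forall>r>0. mass_r f r \<le> ennreal (\<beta> * r)" "\<forall>x. rho f x \<le> 1"
    by (auto simp: A_tilde_def)
  have "4 * (k + 1) \<le> P"
    using four_k_plus_one_le_P0[OF assms(1,3,4)] assms(7) by (rule order_trans)
  then interpret polytropic_rearrangement k P f
    using assms(1) f f_mass by unfold_locales auto
  have "Dfun k ftilde \<le> Dfun k f"
    using assms(3,4,6) f(3) f_mass by (intro Dfun_ftilde_le) auto
  moreover have "(\<integral>\<^sup>+ z. ennreal (indicator {z. P \<le> norm (snd z) \<and> norm (snd z) \<le> P + 1} z
      * sqrt (1 + (norm (snd z))\<^sup>2) * ftilde z) \<partial>lebesgue) = 0"
    using ftilde_vanishes by (subst nn_integral_cong[where v="\<lambda>_. 0"]) (auto simp: indicator_def)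
  moreover have "ftilde (x, v) \<noteq> 0 \<Longrightarrow> norm v \<le> P + 1" for x v
    using ftilde_vanishes[of "(x, v)"] by fastforce
  ultimately show ?thesis
    using spher_sym_ftilde[OF f(2)] rho_ftilde ftilde_bounds ftilde_in_A_tilde[OF assms(5)]
    by (intro exI[of _ ftilde]) auto
qed

end
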